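(* Let $G_1$ be a group whose centre $Z(G_1)$ has index $k$ in $G_1$ (with $k$ finite). Let $n,m\ge0$, let $G\le G_1^n$ be a subgroup, let $w(\bar x,\bar y)$ be a group word in the variables $\bar x=(x_1,\dots,x_n)$, $\bar y=(y_1,\dots,y_m)$ and their inverses, and let $\bar g\in G_1^m$, $c\in G_1$. If the set $\{\bar h\in G:w(\bar h,\bar g)=c\}$ is $2k^n$-large in $G$, then $w(\bar h,\bar g)=c$ for all $\bar h\in G$.
   Context: A subset $X\subseteq G$ is $k$-large in $G$ if the intersection of any $k$ left translates $\bar a_1X\cap\dots\cap\bar a_kX$ ($\bar a_i\in G$) is non-empty. *)

theory Defs
  imports "HOL-Algebra.Coset"
begin

definition center :: "('a, 'b) monoid_scheme \<Rightarrow> 'a set" where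
  "center G = {z \<in> carrier G. \<forall>x \<in> carrier G. z \<otimes>\<^bsub>G\<^esub> x = x \<otimes>\<^bsub>G\<^esub> z}"

definition power_group :: "('a, 'b) monoid_scheme \<Rightarrow> nat \<Rightarrow> 'a list monoid" where
  "power_group G1 n = \<lparr> carrier = {h. length h = n \<and> set h \<subseteq> carrier G1},
     mult = (\<lambda>a b. map2 (\<lambda>x y. x \<otimes>\<^bsub>G1\<^esub> y) a b),
     one = replicate n \<one>\<^bsub>G1\<^esub> \<rparr>"

definition large :: "('a, 'b) monoid_scheme \<Rightarrow> nat \<Rightarrow> 'a set \<Rightarrow> bool" where
  "large G k X \<longleftrightarrow> (\<forall>a. (\<forall>i<k. a i \<in> carrier G) \<longrightarrow> (\<Inter>i<k. a i <#\<^bsub>G\<^esub> X) \<noteq> {})"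

text \<open>Group words in variables x_i (Inl i) and y_j (Inr j); the boolean flag True
  means the letter itself, False its inverse.\<close>
type_synonym word = "((nat + nat) \<times> bool) list"

definition word_vars_ok :: "nat \<Rightarrow> nat \<Rightarrow> word \<Rightarrow> bool" where
  "word_vars_ok n m w \<longleftrightarrow> (\<forall>(v, b) \<in> set w. case v of Inl i \<Rightarrow> i < n | Inr j \<Rightarrow> j < m)"

definition eval_word :: "('a, 'b) monoid_scheme \<Rightarrow> word \<Rightarrow> 'a list \<Rightarrow> 'a list \<Rightarrow> 'a" where
  "eval_word G w h g = foldr (\<lambda>(v, b) acc.
      (let e = (case v of Inl i \<Rightarrow> h ! i | Inr j \<Rightarrow> g ! j)
       in if b then e else inv\<^bsub>G\<^esub> e) \<otimes>\<^bsub>G\<^esub> acc) w \<one>\<^bsub>G\<^esub>"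

end

theory Submission
  imports Defs
begin

(* Let Z be the centre of G1 and N the elements of G all of whose coordinates lie in Z.
   For z in N the word factors as w(h z, g) = w(h, g) w(z, 1), and since the coordinatewise
   Z-cosets classify G modulo N, N has at most k^n left cosets e_i N in G.
   Given h0 in G, pick u in N with w(h0 u, g) = c if there is one. A common point h = e_j z
   of the 2 k^n translates e_i h0^-1 X and e_i (h0 u)^-1 X gives h0 z in X and h0 u z in X;
   the first shows that u exists, and cancelling w(z, 1) in the second gives
   w(h0, g) = w(h0 u, g) = c. *)

lemma center_commute: "z \<in> center G \<Longrightarrow> x \<in> carrier G \<Longrightarrow> z \<otimes>\<^bsub>G\<^esub> x = x \<otimes>\<^bsub>G\<^esub> z"
  by (simp add: center_def)

lemma subgroup_center:
  fixes G (structure)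
  assumes "group G"
  shows "subgroup (center G) G"
proof -
  interpret group G by fact
  show ?thesis
  proof (rule subgroupI)
    show "center G \<subseteq> carrier G" by (auto simp: center_def)
    show "center G \<noteq> {}" using one_closed by (auto simp: center_def)
  next
    fix a assume a: "a \<in> center G"
    then have ac: "a \<in> carrier G" by (simp add: center_def)
    have "inv a \<otimes> x = x \<otimes> inv a" if x: "x \<in> carrier G" for x
    proof -
      have "a \<otimes> (x \<otimes> inv a) = x"
        using x ac by (simp add: m_assoc[symmetric] center_commute[OF a x]) (simp add: m_assoc)
      then show ?thesis using x ac by (metis inv_solve_left m_closed inv_closed)
    qed
    then show "inv a \<in> center G" using ac by (simp add: center_def)
  next
    fix a b assume a: "a \<in> center G" and b: "b \<in> center G"
    then have ac: "a \<in> carrier G" and bc: "b \<in> carrier G" by (simp_all add: center_def)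
    have "a \<otimes> b \<otimes> x = x \<otimes> (a \<otimes> b)" if x: "x \<in> carrier G" for x
    proof -
      have "a \<otimes> b \<otimes> x = a \<otimes> x \<otimes> b" using x ac bc by (simp add: m_assoc center_commute[OF b x])
      also have "\<dots> = x \<otimes> (a \<otimes> b)" using x ac bc by (simp add: m_assoc center_commute[OF a x])
      finally show ?thesis .
    qed
    then show "a \<otimes> b \<in> center G" using ac bc by (simp add: center_def)
  qed
qed

lemma inv_mult_center_if_rcos_eq:
  fixes G (structure)
  assumes "group G" "a \<in> carrier G" "b \<in> carrier G" "center G #> a = center G #> b"
  shows "inv a \<otimes> b \<in> center G"
proof -
  interpret group G by fact
  interpret Z: subgroup "center G" G using subgroup_center[OF assms(1)] .
  have z: "b \<otimes> inv a \<in> center G"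
    using Z.rcos_module_imp[OF is_group assms(2)] repr_independenceD[OF Z.subgroup_axioms assms(3,4)] .
  have "inv a \<otimes> b = inv a \<otimes> ((b \<otimes> inv a) \<otimes> a)" using assms(2,3) by (simp add: m_assoc)
  also have "\<dots> = b \<otimes> inv a"
    using z assms(2,3) by (simp add: center_commute m_assoc[symmetric])
  finally show ?thesis using z by simp
qed

lemma nth_in_if_set_subset [simp]: "set xs \<subseteq> A \<Longrightarrow> i < length xs \<Longrightarrow> xs ! i \<in> A"
  by (meson nth_mem subsetD)

lemma carrier_power_group [simp]:
  "carrier (power_group G n) = {h. length h = n \<and> set h \<subseteq> carrier G}"
  by (simp add: power_group_def)

lemma mult_power_group [simp]: "x \<otimes>\<^bsub>power_group G n\<^esub> y = map2 (\<lambda>a b. a \<otimes>\<^bsub>G\<^esub> b) x y"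
  by (simp add: power_group_def)

lemma one_power_group [simp]: "\<one>\<^bsub>power_group G n\<^esub> = replicate n \<one>\<^bsub>G\<^esub>"
  by (simp add: power_group_def)

lemma group_power_group:
  fixes G (structure)
  assumes "group G"
  shows "group (power_group G n)"
proof -
  interpret group G by fact
  show ?thesis
  proof (rule groupI)
    fix x assume x: "x \<in> carrier (power_group G n)"
    show "\<exists>y\<in>carrier (power_group G n). y \<otimes>\<^bsub>power_group G n\<^esub> x = \<one>\<^bsub>power_group G n\<^esub>"
      using x by (intro bexI[of _ "map (\<lambda>a. inv a) x"] nth_equalityI) auto
  qed (auto simp: set_zip m_assoc intro!: nth_equalityI)
qed

lemma inv_power_group:
  fixes G (structure)
  assumes "group G" "x \<in> carrier (power_group G n)"
  shows "inv\<^bsub>power_group G n\<^esub> x = map (\<lambda>a. inv\<^bsub>G\<^esub> a) x"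
proof -
  interpret group G by fact
  show ?thesis
  proof (rule group.inv_equality[OF group_power_group[OF assms(1)]])
    show "map (\<lambda>a. inv a) x \<otimes>\<^bsub>power_group G n\<^esub> x = \<one>\<^bsub>power_group G n\<^esub>"
      using assms(2) by (intro nth_equalityI) auto
  qed (use assms(2) in auto)
qed

fun eval_letter :: "('a, 'b) monoid_scheme \<Rightarrow> (nat + nat) \<times> bool \<Rightarrow> 'a list \<Rightarrow> 'a list \<Rightarrow> 'a" where
  "eval_letter G (v, b) h g =
     (let e = (case v of Inl i \<Rightarrow> h ! i | Inr j \<Rightarrow> g ! j) in if b then e else inv\<^bsub>G\<^esub> e)"

lemma eval_word_Nil [simp]: "eval_word G [] h g = \<one>\<^bsub>G\<^esub>"
  by (simp add: eval_word_def)

lemma eval_word_Cons [simp]: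
  "eval_word G (l # w) h g = eval_letter G l h g \<otimes>\<^bsub>G\<^esub> eval_word G w h g"
  by (cases l) (simp add: eval_word_def)

lemma word_vars_ok_Cons [simp]:
  "word_vars_ok n m ((v, b) # w) \<longleftrightarrow>
     (case v of Inl i \<Rightarrow> i < n | Inr j \<Rightarrow> j < m) \<and> word_vars_ok n m w"
  by (simp add: word_vars_ok_def)

lemma eval_letter_closed:
  fixes G (structure)
  assumes "group G" "word_vars_ok n m [l]" "h \<in> carrier (power_group G n)"
    "g \<in> carrier (power_group G m)"
  shows "eval_letter G l h g \<in> carrier G"
proof -
  interpret group G by fact
  obtain v b where l: "l = (v, b)" by (cases l)
  show ?thesis using assms(2-4) by (auto simp: l Let_def split: sum.splits)
qed

lemma eval_word_closed:
  fixes G (structure)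
  assumes "group G" "word_vars_ok n m w" "h \<in> carrier (power_group G n)"
    "g \<in> carrier (power_group G m)"
  shows "eval_word G w h g \<in> carrier G"
  using assms(2)
proof (induction w)
  case Nil
  then show ?case using assms(1) by (simp add: group.is_monoid)
next
  case (Cons l w)
  interpret group G by fact
  have "word_vars_ok n m [l]" "word_vars_ok n m w" using Cons.prems by (simp_all add: word_vars_ok_def)
  then show ?case using Cons.IH eval_letter_closed[OF assms(1) _ assms(3,4)] by simp
qed

lemma eval_letter_central:
  fixes G (structure)
  assumes "group G" "word_vars_ok n m [l]" "length z = n" "set z \<subseteq> center G"
  shows "eval_letter G l z (replicate m \<one>) \<in> center G"
proof -
  interpret Z: subgroup "center G" G using subgroup_center[OF assms(1)] .
  obtain v b where l: "l = (v, b)" by (cases l)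
  show ?thesis using assms(2-4) by (auto simp: l Let_def split: sum.splits)
qed

lemma eval_word_mult_central:
  fixes G (structure)
  assumes "group G" "word_vars_ok n m w" "h \<in> carrier (power_group G n)"
    "length z = n" "set z \<subseteq> center G" "g \<in> carrier (power_group G m)"
  shows "eval_word G w (h \<otimes>\<^bsub>power_group G n\<^esub> z) g =
    eval_word G w h g \<otimes> eval_word G w z (replicate m \<one>)"
  using assms(2)
proof (induction w)
  case Nil
  then show ?case using assms(1) by (simp add: group.is_monoid)
next
  case (Cons l w)
  interpret group G by fact
  interpret Z: subgroup "center G" G using subgroup_center[OF assms(1)] .
  obtain v b where l: "l = (v, b)" by (cases l)
  have ok: "word_vars_ok n m [l]" "word_vars_ok n m w"
    using Cons.prems by (simp_all add: l word_vars_ok_def)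
  have zc: "z \<in> carrier (power_group G n)" using assms(4,5) Z.subset by auto
  define L where "L = eval_letter G l h g"
  define C where "C = eval_letter G l z (replicate m \<one>)"
  define E where "E = eval_word G w h g"
  define F where "F = eval_word G w z (replicate m \<one>)"
  have C: "C \<in> center G" unfolding C_def by (rule eval_letter_central[OF assms(1) ok(1) assms(4,5)])
  have one: "replicate m \<one> \<in> carrier (power_group G m)" by (simp add: set_replicate_conv_if)
  have carr: "L \<in> carrier G" "C \<in> carrier G" "E \<in> carrier G" "F \<in> carrier G"
    using eval_letter_closed[OF assms(1) ok(1) assms(3,6)] C Z.subset
      eval_word_closed[OF assms(1) ok(2) assms(3,6)] eval_word_closed[OF assms(1) ok(2) zc one]
    by (auto simp: L_def E_def F_def)
  have letter: "eval_letter G l (h \<otimes>\<^bsub>power_group G n\<^esub> z) g = L \<otimes> C"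
  proof (cases v)
    case (Inl i)
    then have hz: "h ! i \<in> carrier G" "z ! i \<in> center G" "i < n"
      using ok(1) assms(3-5) by (auto simp: word_vars_ok_def l)
    then have "inv (h ! i \<otimes> z ! i) = inv (h ! i) \<otimes> inv (z ! i)"
      using Z.subset by (auto simp: inv_mult_group center_commute)
    then show ?thesis using hz assms(3,4) by (simp add: L_def C_def l Inl Let_def)
  next
    case (Inr j)
    then show ?thesis using ok(1) assms(6) by (auto simp: word_vars_ok_def L_def C_def l Let_def)
  qed
  have "eval_word G (l # w) (h \<otimes>\<^bsub>power_group G n\<^esub> z) g = L \<otimes> C \<otimes> (E \<otimes> F)"
    using letter Cons.IH[OF ok(2)] by (simp add: E_def F_def)
  also have "\<dots> = L \<otimes> (C \<otimes> E) \<otimes> F" using carr by (simp add: m_assoc)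
  also have "\<dots> = L \<otimes> E \<otimes> (C \<otimes> F)" using carr by (simp add: center_commute[OF C] m_assoc)
  finally show ?case by (simp add: L_def C_def E_def F_def)
qed

lemma eval_word_mult_central_cancel:
  fixes G (structure)
  assumes "group G" "word_vars_ok n m w" "x \<in> carrier (power_group G n)" "y \<in> carrier (power_group G n)"
    "length z = n" "set z \<subseteq> center G" "g \<in> carrier (power_group G m)"
    and "eval_word G w (x \<otimes>\<^bsub>power_group G n\<^esub> z) g = eval_word G w (y \<otimes>\<^bsub>power_group G n\<^esub> z) g"
  shows "eval_word G w x g = eval_word G w y g"
proof -
  interpret group G by fact
  have "z \<in> carrier (power_group G n)" "replicate m \<one> \<in> carrier (power_group G m)"
    using assms(5,6) subgroup.subset[OF subgroup_center[OF assms(1)]] by (auto simp: set_replicate_conv_if)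
  then have "eval_word G w z (replicate m \<one>) \<in> carrier G" by (rule eval_word_closed[OF assms(1,2)])
  then show ?thesis
    using assms(8) eval_word_mult_central[OF assms(1,2) _ assms(5,6,7)] assms(3,4)
      eval_word_closed[OF assms(1,2) _ assms(7)] by simp
qed

lemma finite_image_representatives:
  assumes "finite (f ` A)" "card (f ` A) \<le> K" "A \<noteq> {}"
  obtains e where "\<And>i. i < K \<Longrightarrow> e i \<in> A" "\<And>x. x \<in> A \<Longrightarrow> \<exists>i<K. f (e i) = f x"
proof -
  obtain ys where ys: "set ys = f ` A" "distinct ys" using finite_distinct_list[OF assms(1)] by blast
  have len: "length ys \<le> K" using assms(2) distinct_card[OF ys(2)] ys(1) by simp
  obtain a where a: "a \<in> A" using assms(3) by blast
  define e where "e i = (if i < length ys then inv_into A f (ys ! i) else a)" for i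
  show thesis
  proof
    show "e i \<in> A" for i
      using a ys(1) by (auto simp: e_def intro: inv_into_into)
    show "\<exists>i<K. f (e i) = f x" if x: "x \<in> A" for x
    proof -
      obtain i where "i < length ys" "ys ! i = f x"
        using x ys(1) by (metis imageI in_set_conv_nth)
      then show ?thesis using len x ys(1) by (intro exI[of _ i]) (auto simp: e_def f_inv_into_f)
    qed
  qed
qed

lemma (in group) mult_mem_if_mult_mem_l_coset_mult_inv:
  assumes "e \<in> carrier G" "y \<in> carrier G" "z \<in> carrier G" "X \<subseteq> carrier G"
    and "e \<otimes> z \<in> (e \<otimes> inv y) <# X"
  shows "y \<otimes> z \<in> X"
proof -
  obtain x where x: "x \<in> X" "e \<otimes> z = e \<otimes> inv y \<otimes> x" using assms(5) by (auto simp: l_coset_def)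
  have xc: "x \<in> carrier G" using x(1) assms(4) by blast
  have "e \<otimes> (inv y \<otimes> x) = e \<otimes> z" using x(2) assms(1-3) xc by (simp add: m_assoc)
  then have "inv y \<otimes> x = z" using assms(1-3) xc by simp
  then have "x = y \<otimes> z" using assms(1-3) xc by (simp add: inv_solve_left')
  then show ?thesis using x(1) by simp
qed

text \<open>Hypothesis \<open>cancel\<close> holds when \<open>X\<close> is a fibre of a map \<open>\<phi>\<close> with
  \<open>\<phi> (x \<otimes> z) = \<phi> x \<otimes> \<chi> z\<close> for \<open>z \<in> N\<close>.\<close>
lemma large_subset_eq_subgroup:
  fixes G (structure)
  assumes "group G" "subgroup H G" "N \<subseteq> H" "X \<subseteq> H"
    and reps: "\<And>i. i < K \<Longrightarrow> e i \<in> H" and cover: "H \<subseteq> (\<Union>i<K. e i <# N)"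
    and cancel: "\<And>x y z. x \<in> H \<Longrightarrow> y \<in> H \<Longrightarrow> z \<in> N \<Longrightarrow>
      x \<otimes> z \<in> X \<Longrightarrow> y \<otimes> z \<in> X \<Longrightarrow> x \<in> X \<longleftrightarrow> y \<in> X"
    and large: "large (G\<lparr>carrier := H\<rparr>) (2 * K) X"
  shows "X = H"
proof
  interpret group G by fact
  interpret H: subgroup H G by fact
  have carr: "N \<subseteq> carrier G" "X \<subseteq> carrier G" using assms(3,4) H.subset by auto
  show "H \<subseteq> X"
  proof
    fix h0 assume h0: "h0 \<in> H"
    define u where "u = (if \<exists>u\<in>N. h0 \<otimes> u \<in> X then SOME u. u \<in> N \<and> h0 \<otimes> u \<in> X else \<one>)"
    have u: "u \<in> H" and u_sol: "\<exists>u\<in>N. h0 \<otimes> u \<in> X \<Longrightarrow> u \<in> N \<and> h0 \<otimes> u \<in> X"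
      using someI_ex[of "\<lambda>u. u \<in> N \<and> h0 \<otimes> u \<in> X"] assms(3) by (auto simp: u_def)
    define a where "a i = (if i < K then e i \<otimes> inv h0 else e (i - K) \<otimes> inv (h0 \<otimes> u))" for i
    have a: "a i \<in> H" if "i < 2 * K" for i
      using that reps h0 u by (simp add: a_def)
    then have "(\<Inter>i<2 * K. a i <# X) \<noteq> {}"
      using large unfolding large_def l_coset_def by simp
    then obtain h where h: "\<And>i. i < 2 * K \<Longrightarrow> h \<in> a i <# X" by blast
    obtain j where "j < K" using h0 cover by blast
    then have "h \<in> H" using h[of j] a[of j] assms(4) by (auto simp: l_coset_def)
    then obtain i z where i: "i < K" and z: "z \<in> N" and h_eq: "h = e i \<otimes> z"
      using cover by (auto simp: l_coset_def)
    have in_X: "y \<otimes> z \<in> X" if "y \<in> H" "h \<in> (e i \<otimes> inv y) <# X" for y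
      using mult_mem_if_mult_mem_l_coset_mult_inv[OF H.mem_carrier[OF reps[OF i]] H.mem_carrier[OF that(1)]
          subsetD[OF carr(1) z] carr(2)] that(2)
      by (simp add: h_eq)
    have "h0 \<otimes> z \<in> X" using in_X h0 h[of i] i by (simp add: a_def)
    then have "u \<in> N" "h0 \<otimes> u \<in> X" using u_sol z by auto
    moreover have "h0 \<otimes> u \<otimes> z \<in> X" using in_X h0 u h[of "K + i"] i by (simp add: a_def)
    ultimately show "h0 \<in> X" using cancel[OF H.m_closed[OF h0 u] h0 z] \<open>h0 \<otimes> z \<in> X\<close> by blast
  qed
qed (rule assms(4))

lemma power_group_center_cosets_representatives:
  fixes G1 (structure)
  assumes "group G1" "finite (rcosets (center G1))" "card (rcosets (center G1)) = k"
    and "subgroup G (power_group G1 n)"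
  obtains e where "\<And>i. i < k ^ n \<Longrightarrow> e i \<in> G"
    and "G \<subseteq> (\<Union>i<k ^ n. e i <#\<^bsub>power_group G1 n\<^esub> {h \<in> G. set h \<subseteq> center G1})"
proof -
  let ?P = "power_group G1 n"
  interpret G1: group G1 by fact
  interpret P: group ?P by (rule group_power_group[OF assms(1)])
  interpret G: subgroup G ?P by fact
  define f where "f h = map (\<lambda>x. center G1 #> x) h" for h
  have "f ` G \<subseteq> {xs. set xs \<subseteq> rcosets (center G1) \<and> length xs = n}"
    using G.subset subgroup.subset[OF subgroup_center[OF assms(1)]]
    by (fastforce simp: f_def intro!: G1.rcosetsI)
  then have "finite (f ` G)" "card (f ` G) \<le> k ^ n"
    using finite_subset card_mono finite_lists_length_eq[OF assms(2)]
      card_lists_length_eq[OF assms(2)] assms(3)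
    by (metis (no_types, lifting))+
  then obtain e where e: "\<And>i. i < k ^ n \<Longrightarrow> e i \<in> G" and rep: "\<And>h. h \<in> G \<Longrightarrow> \<exists>i<k ^ n. f (e i) = f h"
    using finite_image_representatives[of f G "k ^ n"] G.one_closed by blast
  show thesis
  proof (rule that[OF e])
    show "G \<subseteq> (\<Union>i<k ^ n. e i <#\<^bsub>?P\<^esub> {h \<in> G. set h \<subseteq> center G1})"
    proof
      fix h assume h: "h \<in> G"
      obtain i where i: "i < k ^ n" "f (e i) = f h" using rep[OF h] by blast
      define z where "z = inv\<^bsub>?P\<^esub> e i \<otimes>\<^bsub>?P\<^esub> h"
      have t: "e i \<in> carrier ?P" and hP: "h \<in> carrier ?P" using e[OF i(1)] h G.subset by auto
      have "set z \<subseteq> center G1"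
      proof -
        have "inv (e i ! l) \<otimes> h ! l \<in> center G1" if "l < n" for l
        proof -
          have "center G1 #> (e i ! l) = center G1 #> (h ! l)"
            using arg_cong[OF i(2), of "\<lambda>xs. xs ! l"] t hP that by (simp add: f_def)
          then show ?thesis using inv_mult_center_if_rcos_eq[OF assms(1)] t hP that by simp
        qed
        then show ?thesis using t hP by (auto simp: z_def inv_power_group[OF assms(1)] set_conv_nth)
      qed
      moreover have zG: "z \<in> G" unfolding z_def using e[OF i(1)] h by (intro G.m_closed G.m_inv_closed)
      moreover have "h = e i \<otimes>\<^bsub>?P\<^esub> z" using P.inv_solve_left'[OF G.mem_carrier[OF zG] t hP] z_def by blast
      ultimately show "h \<in> (\<Union>i<k ^ n. e i <#\<^bsub>?P\<^esub> {h \<in> G. set h \<subseteq> center G1})"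
        using i(1) by (auto simp: l_coset_def)
    qed
  qed
qed

theorem corollary3p6:
  fixes G1 :: "('a, 'b) monoid_scheme" and G :: "'a list set"
    and n m k :: nat and w :: word and g :: "'a list" and c :: 'a
  assumes "group G1"
    and "finite (rcosets\<^bsub>G1\<^esub> (center G1))"
    and "card (rcosets\<^bsub>G1\<^esub> (center G1)) = k"
    and "subgroup G (power_group G1 n)"
    and "word_vars_ok n m w"
    and "length g = m" and "set g \<subseteq> carrier G1"
    and "c \<in> carrier G1"
    and "large ((power_group G1 n)\<lparr>carrier := G\<rparr>) (2 * k ^ n)
           {h \<in> G. eval_word G1 w h g = c}"
  shows "\<forall>h \<in> G. eval_word G1 w h g = c"
proof -
  let ?N = "{h \<in> G. set h \<subseteq> center G1}"
  let ?X = "{h \<in> G. eval_word G1 w h g = c}"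
  have g: "g \<in> carrier (power_group G1 m)" using assms(6,7) by simp
  obtain e where e: "\<And>i. i < k ^ n \<Longrightarrow> e i \<in> G"
    and cover: "G \<subseteq> (\<Union>i<k ^ n. e i <#\<^bsub>power_group G1 n\<^esub> ?N)"
    using power_group_center_cosets_representatives[OF assms(1-4)] by blast
  have cancel: "x \<in> ?X \<longleftrightarrow> y \<in> ?X" if "x \<in> G" "y \<in> G" "z \<in> ?N"
    "x \<otimes>\<^bsub>power_group G1 n\<^esub> z \<in> ?X" "y \<otimes>\<^bsub>power_group G1 n\<^esub> z \<in> ?X" for x y z
  proof -
    have xyz: "x \<in> carrier (power_group G1 n)" "y \<in> carrier (power_group G1 n)"
      "length z = n" "set z \<subseteq> center G1"
      using that(1-3) subgroup.subset[OF assms(4)] by auto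
    have "eval_word G1 w (x \<otimes>\<^bsub>power_group G1 n\<^esub> z) g = eval_word G1 w (y \<otimes>\<^bsub>power_group G1 n\<^esub> z) g"
      using that(4,5) by simp
    then have "eval_word G1 w x g = eval_word G1 w y g"
      by (rule eval_word_mult_central_cancel[OF assms(1,5) xyz g])
    then show ?thesis using that(1,2) by simp
  qed
  have "?X = G"
    using large_subset_eq_subgroup[OF group_power_group[OF assms(1)] assms(4) _ _ e cover cancel assms(9)]
    by auto
  then show ?thesis by auto
qed

end
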